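(* Let $w=w_1\cdots w_n$ be a word of distinct positive integers avoiding $31245,32145,31254,32154$, with positions of left-to-right maxima $l_1<\dots<l_s$ and of right-to-left maxima $r_1<\dots<r_t$ ($l_s=r_1$). Assume $t>1$, $l_s>s$, $s>2$ and $w_{l_{s-1}}>w_{r_2}$. Let $x=\max(\{j: 1\le j<l_{s-1},\ w_j>w_{j+1}\}\cup\{0\})$. Then one of the following holds: (II-1) $x=0$; (II-2) $x\ne0$ and $l_s=l_{s-1}+1$; (II-3) $x\neq0$, $l_s>l_{s-1}+1$, the set $\{i: l_{s-1}<i<l_s,\ w_x<w_i<w_{l_{s-1}}\}$ is nonempty, and with $k$ its maximum we have $w_x<w_j<w_{l_{s-1}}$ for all $l_{s-1}<j\le k$ and $w_j<w_x$ for all $k<j<l_s$; moreover, if $k<l_s-1$ then $w_x>w_{r_2}$; (II-4) $x\ne0$, $l_s>l_{s-1}+1$, $w_j<w_x$ for all $l_{s-1}<j<l_s$, and $w_x>w_{r_2}$.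
   Context: A word of distinct positive integers avoids a pattern $P$ (a permutation of $[m]$) if no subsequence of length $m$ is order-isomorphic to $P$. A left-to-right (resp. right-to-left) maximum of $w$ is a letter $w_i$ greater than all letters to its left (resp. right). *)

theory Defs
  imports Main "HOL-Library.Sublist"
begin

definition letter :: "nat list \<Rightarrow> nat \<Rightarrow> nat" where
  "letter w i = w ! (i - 1)"

definition distinct_pos_word :: "nat list \<Rightarrow> bool" where
  "distinct_pos_word w \<longleftrightarrow> distinct w \<and> (\<forall>a \<in> set w. 0 < a)"

definition is_perm_pattern :: "nat list \<Rightarrow> bool" where
  "is_perm_pattern P \<longleftrightarrow> set P = {1..length P} \<and> distinct P"

definition contains_pattern :: "nat list \<Rightarrow> nat list \<Rightarrow> bool" where
  "contains_pattern w P \<longleftrightarrow>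
     (\<exists>v. subseq v w \<and> length v = length P \<and>
          (\<forall>a < length P. \<forall>b < length P. v ! a < v ! b \<longleftrightarrow> P ! a < P ! b))"

definition avoids :: "nat list \<Rightarrow> nat list \<Rightarrow> bool" where
  "avoids w P \<longleftrightarrow> \<not> contains_pattern w P"

definition ltr_max_pos :: "nat list \<Rightarrow> nat set" where
  "ltr_max_pos w = {i. 1 \<le> i \<and> i \<le> length w \<and>
      (\<forall>j. 1 \<le> j \<and> j < i \<longrightarrow> letter w j < letter w i)}"

definition rtl_max_pos :: "nat list \<Rightarrow> nat set" where
  "rtl_max_pos w = {i. 1 \<le> i \<and> i \<le> length w \<and>
      (\<forall>j. i < j \<and> j \<le> length w \<longrightarrow> letter w j < letter w i)}"

definition lpos :: "nat list \<Rightarrow> nat \<Rightarrow> nat" where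
  "lpos w k = sorted_list_of_set (ltr_max_pos w) ! (k - 1)"

definition rpos :: "nat list \<Rightarrow> nat \<Rightarrow> nat" where
  "rpos w k = sorted_list_of_set (rtl_max_pos w) ! (k - 1)"

end

theory Submission
  imports Defs
begin

text \<open>Let \<open>x\<close> be the last descent before \<open>a = l_{s-1}\<close>. As \<open>w_{x+1} < w_x\<close>, no letter
  after \<open>x + 1\<close> that is smaller than \<open>w_x\<close> can be followed by two letters larger than \<open>w_x\<close>:
  together with \<open>w_x\<close> and \<open>w_{x+1}\<close> they would form one of the patterns \<open>3{12}{45}\<close>. The
  maximum \<open>w_m\<close>, \<open>m = l_s\<close>, exceeds \<open>w_x\<close>, so once the letters between \<open>a\<close> and \<open>m\<close> drop below
  \<open>w_x\<close> they stay below, and then \<open>w_{r_2} < w_x\<close> too, as \<open>r_2 > m\<close>. Since these letters are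
  also below \<open>w_a\<close>, they form a run in \<open>(w_x, w_a)\<close> followed by a run below \<open>w_x\<close>.\<close>

lemma subseq_map_nth:
  assumes "sorted_wrt (<) is" "\<forall>i\<in>set is. i < length ys"
  shows "subseq (map ((!) ys) is) ys"
  using assms
proof (induction ys arbitrary: "is")
  case Nil
  then show ?case by (cases "is") auto
next
  case (Cons y ys)
  let ?shift = "map (\<lambda>k. k - 1)"
  have shift: "map ((!) (y # ys)) js = map ((!) ys) (?shift js)"
    and sorted_shift: "sorted_wrt (<) js \<Longrightarrow> sorted_wrt (<) (?shift js)"
    if "\<forall>k\<in>set js. 0 < k" for js
    using that by (auto simp: nth_Cons' sorted_wrt_map elim!: sorted_wrt_mono_rel[rotated])
  show ?case
  proof (cases "is")
    case (Cons i is')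
    show ?thesis
    proof (cases "i = 0")
      case True
      with Cons Cons.prems have "\<forall>k\<in>set is'. 0 < k" by auto
      then have "subseq (map ((!) (y # ys)) is') ys"
        unfolding shift[OF \<open>\<forall>k\<in>set is'. 0 < k\<close>]
        using Cons Cons.prems by (intro Cons.IH sorted_shift) fastforce+
      with Cons True show ?thesis by simp
    next
      case False
      with Cons Cons.prems have "\<forall>k\<in>set is. 0 < k" by auto
      then have "subseq (map ((!) (y # ys)) is) ys"
        unfolding shift[OF \<open>\<forall>k\<in>set is. 0 < k\<close>]
        using Cons.prems by (intro Cons.IH sorted_shift) fastforce+
      then show ?thesis by (rule list_emb_Cons)
    qed
  qed simp
qed

lemma letter_eq_letter_iff:
  assumes "distinct w" "1 \<le> i" "i \<le> length w" "1 \<le> j" "j \<le> length w"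
  shows "letter w i = letter w j \<longleftrightarrow> i = j"
  using assms nth_eq_iff_index_eq[of w "i - 1" "j - 1"] unfolding letter_def by auto

definition avoids_3_12_45 :: "nat list \<Rightarrow> bool" where
  "avoids_3_12_45 w \<longleftrightarrow> avoids w [3,1,2,4,5] \<and> avoids w [3,2,1,4,5] \<and>
     avoids w [3,1,2,5,4] \<and> avoids w [3,2,1,5,4]"

lemma order_iso_3_12_45:
  fixes A B C D E :: nat
  assumes "B < A" "C < A" "A < D" "A < E" "B \<noteq> C" "D \<noteq> E"
  shows "\<exists>P\<in>{[3,1,2,4,5::nat],[3,2,1,4,5],[3,1,2,5,4],[3,2,1,5,4]}.
    \<forall>a < length P. \<forall>b < length P.
      [A,B,C,D,E] ! a < [A,B,C,D,E] ! b \<longleftrightarrow> P ! a < P ! b"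
  using assms by (cases "B < C"; cases "D < E") (auto simp: All_less_Suc numeral_eq_Suc)

lemma avoids_3_12_45_no_occurrence:
  assumes "distinct w" "avoids_3_12_45 w"
    and "1 \<le> p" "p < q" "q < r" "r < u" "u < v" "v \<le> length w"
    and "letter w q < letter w p" "letter w r < letter w p"
    and "letter w p < letter w u" "letter w p < letter w v"
  shows False
proof -
  let ?v = "[letter w p, letter w q, letter w r, letter w u, letter w v]"
  have "subseq (map ((!) w) [p - 1, q - 1, r - 1, u - 1, v - 1]) w"
    by (rule subseq_map_nth) (use assms(3-8) in \<open>simp, intro conjI; linarith\<close>)+
  then have sub: "subseq ?v w"
    by (simp add: letter_def)
  have "letter w q \<noteq> letter w r" "letter w u \<noteq> letter w v"
    using assms(1,3-8) by (simp_all add: letter_eq_letter_iff)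
  then obtain P :: "nat list" where P: "P \<in> {[3,1,2,4,5],[3,2,1,4,5],[3,1,2,5,4],[3,2,1,5,4]}"
    "\<forall>a < length P. \<forall>b < length P. ?v ! a < ?v ! b \<longleftrightarrow> P ! a < P ! b"
    using order_iso_3_12_45[OF assms(9-12)] by blast
  then have "contains_pattern w P"
    unfolding contains_pattern_def using sub by (intro exI[of _ ?v]) auto
  with P(1) assms(2) show False
    unfolding avoids_3_12_45_def avoids_def by blast
qed

lemma sorted_list_of_set_nth_less:
  fixes A :: "nat set"
  assumes "finite A" "i < j" "j < card A"
  shows "sorted_list_of_set A ! i < sorted_list_of_set A ! j"
  using assms by (intro sorted_wrt_nth_less[OF strict_sorted_list_of_set]) auto

lemma sorted_list_of_set_nth_Suc_le:
  fixes A :: "nat set"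
  assumes "finite A" "Suc k < card A" "y \<in> A" "sorted_list_of_set A ! k < y"
  shows "sorted_list_of_set A ! Suc k \<le> y"
proof -
  let ?xs = "sorted_list_of_set A"
  obtain j where j: "j < length ?xs" "y = ?xs ! j"
    using assms(1,3) by (metis in_set_conv_nth set_sorted_list_of_set)
  have "\<not> j \<le> k"
    using sorted_nth_mono[OF sorted_sorted_list_of_set, of j k A] assms j by auto
  then show ?thesis
    using sorted_nth_mono[OF sorted_sorted_list_of_set, of "Suc k" j A] j by auto
qed

lemma finite_ltr_max_pos: "finite (ltr_max_pos w)"
  by (rule finite_subset[of _ "{1..length w}"]) (auto simp: ltr_max_pos_def)

lemma finite_rtl_max_pos: "finite (rtl_max_pos w)"
  by (rule finite_subset[of _ "{1..length w}"]) (auto simp: rtl_max_pos_def)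

lemma lpos_in_ltr_max_pos:
  "1 \<le> k \<Longrightarrow> k \<le> card (ltr_max_pos w) \<Longrightarrow> lpos w k \<in> ltr_max_pos w"
  using nth_mem[of "k - 1" "sorted_list_of_set (ltr_max_pos w)"]
  by (simp add: lpos_def finite_ltr_max_pos)

lemma rpos_in_rtl_max_pos:
  "1 \<le> k \<Longrightarrow> k \<le> card (rtl_max_pos w) \<Longrightarrow> rpos w k \<in> rtl_max_pos w"
  using nth_mem[of "k - 1" "sorted_list_of_set (rtl_max_pos w)"]
  by (simp add: rpos_def finite_rtl_max_pos)

lemma lpos_less_lpos_Suc:
  "1 \<le> k \<Longrightarrow> Suc k \<le> card (ltr_max_pos w) \<Longrightarrow> lpos w k < lpos w (Suc k)"
  unfolding lpos_def by (rule sorted_list_of_set_nth_less[OF finite_ltr_max_pos]) auto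

lemma rpos_1_less_rpos_2: "1 < card (rtl_max_pos w) \<Longrightarrow> rpos w 1 < rpos w 2"
  unfolding rpos_def by (rule sorted_list_of_set_nth_less[OF finite_rtl_max_pos]) auto

lemma ltr_max_pos_le_rtl_max_pos:
  "i \<in> ltr_max_pos w \<Longrightarrow> j \<in> rtl_max_pos w \<Longrightarrow> i \<le> j"
proof (rule ccontr)
  assume "i \<in> ltr_max_pos w" "j \<in> rtl_max_pos w" "\<not> i \<le> j"
  then have "letter w j < letter w i" "letter w i < letter w j"
    unfolding ltr_max_pos_def rtl_max_pos_def by auto
  then show False by simp
qed

lemma ltr_max_dominates:
  assumes "distinct w" "1 \<le> j" "j \<le> length w"
  obtains i where "i \<in> ltr_max_pos w" "i \<le> j" "letter w j \<le> letter w i"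
proof -
  let ?M = "Max (letter w ` {1..j})"
  have "?M \<in> letter w ` {1..j}"
    using assms(2) by (intro Max_in) auto
  then obtain i where i: "1 \<le> i" "i \<le> j" "letter w i = ?M"
    by auto
  have "letter w i' < letter w i" if "1 \<le> i'" "i' < i" for i'
  proof -
    have "letter w i' \<le> ?M"
      using that i by (intro Max_ge) auto
    moreover have "letter w i' \<noteq> letter w i"
      using that i(1,2) assms by (simp add: letter_eq_letter_iff)
    ultimately show ?thesis using i(3) by simp
  qed
  then have "i \<in> ltr_max_pos w"
    using i assms by (auto simp: ltr_max_pos_def)
  moreover have "letter w j \<le> letter w i"
    using i(3) assms(2) by simp
  ultimately show thesis
    using i(2) that by blast
qed

lemma letter_between_lpos_less:
  assumes "distinct w" "1 \<le> k" "Suc k \<le> card (ltr_max_pos w)"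
    and "lpos w k < j" "j < lpos w (Suc k)"
  shows "letter w j < letter w (lpos w k)"
proof -
  let ?a = "lpos w k"
  have a: "?a \<in> ltr_max_pos w" and m: "lpos w (Suc k) \<in> ltr_max_pos w"
    using assms(2,3) by (auto intro: lpos_in_ltr_max_pos)
  then have j: "1 \<le> j" "j \<le> length w"
    using assms(4,5) by (auto simp: ltr_max_pos_def)
  obtain i where i: "i \<in> ltr_max_pos w" "i \<le> j" "letter w j \<le> letter w i"
    using ltr_max_dominates[OF assms(1) j] .
  have "i \<le> ?a"
  proof (rule ccontr)
    assume "\<not> i \<le> ?a"
    then have "sorted_list_of_set (ltr_max_pos w) ! Suc (k - 1) \<le> i"
      using assms(2,3)
      by (intro sorted_list_of_set_nth_Suc_le[OF finite_ltr_max_pos _ i(1)]) (simp_all add: lpos_def)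
    then have "lpos w (Suc k) \<le> i"
      using assms(2) by (simp add: lpos_def)
    with i(2) assms(5) show False by simp
  qed
  then have "letter w i \<le> letter w ?a"
    using a i(1) by (cases "i = ?a") (auto simp: ltr_max_pos_def)
  moreover have "j \<noteq> ?a" using assms(4) by simp
  then have "letter w j \<noteq> letter w ?a"
    using a j assms(1) by (simp add: letter_eq_letter_iff ltr_max_pos_def)
  ultimately show ?thesis using i(3) by simp
qed

locale descent_before_gap =
  fixes w :: "nat list" and x a m r :: nat
  assumes distinct: "distinct w"
    and avoids: "avoids_3_12_45 w"
    and descent: "1 \<le> x" "x < a" "letter w (x + 1) < letter w x"
    and gap: "a < m" "\<And>j. a < j \<Longrightarrow> j < m \<Longrightarrow> letter w j < letter w a"
    and x_below_m: "letter w x < letter w m"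
    and r: "m < r" "r \<le> length w"
begin

abbreviation mid :: "nat set" where
  "mid \<equiv> {i. a < i \<and> i < m \<and> letter w x < letter w i \<and> letter w i < letter w a}"

lemma no_occurrence_after_descent:
  assumes "x + 1 < j" "j < u" "u < v" "v \<le> length w"
    and "letter w j < letter w x" "letter w x < letter w u" "letter w x < letter w v"
  shows False
  using avoids_3_12_45_no_occurrence[OF distinct avoids descent(1), of "x + 1" j u v]
    assms descent(3) by simp

lemma letter_cases_x:
  assumes "x < j" "j \<le> length w"
  obtains "letter w j < letter w x" | "letter w x < letter w j"
proof -
  have "letter w j \<noteq> letter w x"
    using assms descent(1) distinct by (simp add: letter_eq_letter_iff)
  then show thesis using that by linarith
qed

lemma below_x_persists:
  assumes "a < j" "j < j'" "j' < m" "letter w j < letter w x"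
  shows "letter w j' < letter w x"
proof (rule letter_cases_x)
  show "x < j'" "j' \<le> length w" using assms descent r by simp_all
  assume "letter w x < letter w j'"
  then show ?thesis
    using no_occurrence_after_descent[of j j' m] assms descent x_below_m r by simp
qed

lemma below_x_forces_r:
  assumes "a < j" "j < m" "letter w j < letter w x"
  shows "letter w r < letter w x"
proof (rule letter_cases_x)
  show "x < r" "r \<le> length w" using assms descent r by simp_all
  assume "letter w x < letter w r"
  then show ?thesis
    using no_occurrence_after_descent[of j m r] assms descent x_below_m r by simp
qed

lemma gap_letter_cases:
  assumes "a < j" "j < m"
  shows "j \<in> mid \<or> letter w j < letter w x"
proof (rule letter_cases_x[of j])
  show "x < j" "j \<le> length w" using assms descent r by simp_all
qed (use assms gap(2)[OF assms] in auto)

lemma finite_mid: "finite mid"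
  by (rule finite_subset[of _ "{..<m}"]) auto

lemma mid_empty_below_x:
  "mid = {} \<Longrightarrow> a < j \<Longrightarrow> j < m \<Longrightarrow> letter w j < letter w x"
  using gap_letter_cases by blast

lemma mid_upto_Max:
  assumes "mid \<noteq> {}" "a < j" "j \<le> Max mid"
  shows "j \<in> mid"
proof -
  have k: "Max mid \<in> mid" using Max_in[OF finite_mid assms(1)] .
  have "\<not> letter w j < letter w x"
  proof
    assume "letter w j < letter w x"
    then have "letter w (Max mid) < letter w x"
      using below_x_persists[of j "Max mid"] assms k by (cases "j = Max mid") auto
    with k show False by simp
  qed
  moreover have "Max mid < m" using k by blast
  then have "j < m" using assms(3) by simp
  ultimately show ?thesis using gap_letter_cases[of j] assms by blast
qed

lemma mid_after_Max:
  assumes "mid \<noteq> {}" "Max mid < j" "j < m"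
  shows "letter w j < letter w x"
proof -
  have "j \<notin> mid"
  proof
    assume "j \<in> mid"
    then have "j \<le> Max mid" by (rule Max_ge[OF finite_mid])
    with assms(2) show False by simp
  qed
  moreover have "a < j" using Max_in[OF finite_mid assms(1)] assms(2) by simp
  ultimately show ?thesis using gap_letter_cases[of j] assms(3) by blast
qed

lemma gap_structure:
  "m = a + 1
    \<or> (m > a + 1 \<and> mid \<noteq> {} \<and>
        (let k = Max mid in
          (\<forall>j. a < j \<and> j \<le> k \<longrightarrow> letter w x < letter w j \<and> letter w j < letter w a) \<and>
          (\<forall>j. k < j \<and> j < m \<longrightarrow> letter w j < letter w x) \<and>
          (k < m - 1 \<longrightarrow> letter w x > letter w r)))
    \<or> (m > a + 1 \<and> (\<forall>j. a < j \<and> j < m \<longrightarrow> letter w j < letter w x) \<and>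
        letter w x > letter w r)"
proof (cases "m = a + 1")
  case False
  then have m: "m > a + 1" using gap(1) by simp
  show ?thesis
  proof (cases "mid = {}")
    case True
    have below: "\<forall>j. a < j \<and> j < m \<longrightarrow> letter w j < letter w x"
      using mid_empty_below_x[OF True] by blast
    then have "letter w r < letter w x"
      using below_x_forces_r[of "a + 1"] m by simp
    with m below show ?thesis by (intro disjI2) simp
  next
    case False
    let ?k = "Max mid"
    have "?k \<in> mid" using Max_in[OF finite_mid False] .
    have "\<forall>j. a < j \<and> j \<le> ?k \<longrightarrow> letter w x < letter w j \<and> letter w j < letter w a"
      using mid_upto_Max[OF False] by blast
    moreover have after: "\<forall>j. ?k < j \<and> j < m \<longrightarrow> letter w j < letter w x"
      using mid_after_Max[OF False] by blast
    moreover have "?k < m - 1 \<longrightarrow> letter w x > letter w r"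
      using below_x_forces_r[of "?k + 1"] after \<open>?k \<in> mid\<close> by auto
    ultimately show ?thesis
      using m False unfolding Let_def by (intro disjI2 disjI1 conjI)
  qed
qed simp

end

theorem lemma3p2:
  fixes w :: "nat list"
  defines "s \<equiv> card (ltr_max_pos w)"
      and "t \<equiv> card (rtl_max_pos w)"
  defines "x \<equiv> Max ({j. 1 \<le> j \<and> j < lpos w (s - 1) \<and> letter w j > letter w (j + 1)} \<union> {0})"
  assumes word: "distinct_pos_word w"
      and av1: "avoids w [3,1,2,4,5]"
      and av2: "avoids w [3,2,1,4,5]"
      and av3: "avoids w [3,1,2,5,4]"
      and av4: "avoids w [3,2,1,5,4]"
      and ht: "t > 1"
      and hls: "lpos w s > s"
      and hs: "s > 2"
      and hcmp: "letter w (lpos w (s - 1)) > letter w (rpos w 2)"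
  shows "x = 0
    \<or> (x \<noteq> 0 \<and> lpos w s = lpos w (s - 1) + 1)
    \<or> (x \<noteq> 0 \<and> lpos w s > lpos w (s - 1) + 1 \<and>
        {i. lpos w (s - 1) < i \<and> i < lpos w s \<and>
            letter w x < letter w i \<and> letter w i < letter w (lpos w (s - 1))} \<noteq> {} \<and>
        (let k = Max {i. lpos w (s - 1) < i \<and> i < lpos w s \<and>
            letter w x < letter w i \<and> letter w i < letter w (lpos w (s - 1))} in
          (\<forall>j. lpos w (s - 1) < j \<and> j \<le> k \<longrightarrow>
               letter w x < letter w j \<and> letter w j < letter w (lpos w (s - 1))) \<and>
          (\<forall>j. k < j \<and> j < lpos w s \<longrightarrow> letter w j < letter w x) \<and>
          (k < lpos w s - 1 \<longrightarrow> letter w x > letter w (rpos w 2))))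
    \<or> (x \<noteq> 0 \<and> lpos w s > lpos w (s - 1) + 1 \<and>
        (\<forall>j. lpos w (s - 1) < j \<and> j < lpos w s \<longrightarrow> letter w j < letter w x) \<and>
        letter w x > letter w (rpos w 2))"
proof (cases "x = 0")
  case False
  let ?a = "lpos w (s - 1)" and ?m = "lpos w s" and ?r = "rpos w 2"
  have dist: "distinct w" using word by (simp add: distinct_pos_word_def)
  have s: "1 \<le> s - 1" "Suc (s - 1) = s" "s \<le> card (ltr_max_pos w)"
    using hs by (simp_all add: s_def)
  have m: "?m \<in> ltr_max_pos w"
    using s by (intro lpos_in_ltr_max_pos) simp_all
  have gap: "?a < ?m" "\<And>j. ?a < j \<Longrightarrow> j < ?m \<Longrightarrow> letter w j < letter w ?a"
    using lpos_less_lpos_Suc[of "s - 1" w] letter_between_lpos_less[OF dist, of "s - 1"] s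
    by simp_all
  have r: "?m < ?r" "?r \<le> length w"
    using rpos_1_less_rpos_2[of w] ht rpos_in_rtl_max_pos[of 1 w] rpos_in_rtl_max_pos[of 2 w]
      ltr_max_pos_le_rtl_max_pos[OF m]
    by (fastforce simp: t_def rtl_max_pos_def)+
  have "finite {j. 1 \<le> j \<and> j < ?a \<and> letter w j > letter w (j + 1)}" by simp
  then have "x \<in> {j. 1 \<le> j \<and> j < ?a \<and> letter w j > letter w (j + 1)} \<union> {0}"
    unfolding x_def by (intro Max_in) auto
  then have descent: "1 \<le> x" "x < ?a" "letter w (x + 1) < letter w x"
    using False by auto
  moreover have "letter w x < letter w ?m"
    using m descent gap(1) by (simp add: ltr_max_pos_def)
  ultimately interpret descent_before_gap w x ?a ?m ?r
    using dist av1 av2 av3 av4 gap r by unfold_locales (simp_all add: avoids_3_12_45_def)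
  show ?thesis using gap_structure False by blast
qed simp

end
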